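(* Let $a>b>0$ and let $E$ be the ellipse $\frac{x^2}{a^2}+\frac{y^2}{b^2}=1$. Over the family of 3-periodic billiard orbits $T=P_1P_2P_3$ in $E$, the following three quantities are constant (independent of the orbit): (i) the sum $\cos\theta_1+\cos\theta_2+\cos\theta_3$ of the cosines of the interior angles $\theta_i$ of $T$; (ii) the product $|\cos\theta_1'\cos\theta_2'\cos\theta_3'|$ of the cosines of the interior angles $\theta_i'$ of the excentral triangle $T'$ of $T$; (iii) the ratio $A'/A$ of the area $A'$ of the excentral triangle $T'$ to the area $A$ of $T$.
   Context: A 3-periodic billiard orbit in the ellipse $E$ is a nondegenerate triangle $P_1P_2P_3$ with all vertices on $E$ such that at each vertex $P_i$ the normal line to $E$ at $P_i$ bisects the interior angle of the triangle at $P_i$. These orbits form a one-parameter family. The excentral triangle of a triangle is the triangle whose vertices are its three excenters (the intersections of pairs of exterior angle bisectors). *)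

theory Defs
  imports Complex_Main
begin

type_synonym pt = "real \<times> real"

definition vsub :: "pt \<Rightarrow> pt \<Rightarrow> pt" where
  "vsub P Q = (fst P - fst Q, snd P - snd Q)"

definition dot :: "pt \<Rightarrow> pt \<Rightarrow> real" where
  "dot u v = fst u * fst v + snd u * snd v"

definition cross :: "pt \<Rightarrow> pt \<Rightarrow> real" where
  "cross u v = fst u * snd v - snd u * fst v"

definition vlen :: "pt \<Rightarrow> real" where
  "vlen u = sqrt (dot u u)"

definition vscale :: "real \<Rightarrow> pt \<Rightarrow> pt" where
  "vscale c u = (c * fst u, c * snd u)"

definition vadd :: "pt \<Rightarrow> pt \<Rightarrow> pt" where
  "vadd u v = (fst u + fst v, snd u + snd v)"

definition unit_dir :: "pt \<Rightarrow> pt \<Rightarrow> pt" where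
  "unit_dir P Q = vscale (1 / vlen (vsub Q P)) (vsub Q P)"

definition on_ellipse :: "real \<Rightarrow> real \<Rightarrow> pt \<Rightarrow> bool" where
  "on_ellipse a b P \<longleftrightarrow> (fst P)\<^sup>2 / a\<^sup>2 + (snd P)\<^sup>2 / b\<^sup>2 = 1"

text \<open>Normal direction of the ellipse at P (gradient of the defining function, up to factor 2).\<close>
definition ellipse_normal :: "real \<Rightarrow> real \<Rightarrow> pt \<Rightarrow> pt" where
  "ellipse_normal a b P = (fst P / a\<^sup>2, snd P / b\<^sup>2)"

definition nondegenerate :: "pt \<Rightarrow> pt \<Rightarrow> pt \<Rightarrow> bool" where
  "nondegenerate A B C \<longleftrightarrow> cross (vsub B A) (vsub C A) \<noteq> 0"

definition int_bisector_dir :: "pt \<Rightarrow> pt \<Rightarrow> pt \<Rightarrow> pt" where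
  "int_bisector_dir A B C = vadd (unit_dir A B) (unit_dir A C)"

definition ext_bisector_dir :: "pt \<Rightarrow> pt \<Rightarrow> pt \<Rightarrow> pt" where
  "ext_bisector_dir A B C = vsub (unit_dir A B) (unit_dir A C)"

definition on_line :: "pt \<Rightarrow> pt \<Rightarrow> pt \<Rightarrow> bool" where
  "on_line A d X \<longleftrightarrow> cross (vsub X A) d = 0"

text \<open>The normal line to E at A (through A, direction the normal) bisects the interior angle at A:
  it coincides with the internal bisector line, i.e. the directions are parallel.\<close>
definition normal_bisects :: "real \<Rightarrow> real \<Rightarrow> pt \<Rightarrow> pt \<Rightarrow> pt \<Rightarrow> bool" where
  "normal_bisects a b A B C \<longleftrightarrow> cross (ellipse_normal a b A) (int_bisector_dir A B C) = 0"

definition billiard3 :: "real \<Rightarrow> real \<Rightarrow> pt \<Rightarrow> pt \<Rightarrow> pt \<Rightarrow> bool" where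
  "billiard3 a b P1 P2 P3 \<longleftrightarrow>
     nondegenerate P1 P2 P3 \<and>
     on_ellipse a b P1 \<and> on_ellipse a b P2 \<and> on_ellipse a b P3 \<and>
     normal_bisects a b P1 P2 P3 \<and> normal_bisects a b P2 P3 P1 \<and> normal_bisects a b P3 P1 P2"

definition interior_angle :: "pt \<Rightarrow> pt \<Rightarrow> pt \<Rightarrow> real" where
  "interior_angle A B C =
     arccos (dot (vsub B A) (vsub C A) / (vlen (vsub B A) * vlen (vsub C A)))"

text \<open>Excenter opposite vertex A: the intersection of the exterior angle bisectors at B and C.\<close>
definition excenter :: "pt \<Rightarrow> pt \<Rightarrow> pt \<Rightarrow> pt" where
  "excenter A B C = (THE X. on_line B (ext_bisector_dir B C A) X \<and> on_line C (ext_bisector_dir C A B) X)"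

definition tri_area :: "pt \<Rightarrow> pt \<Rightarrow> pt \<Rightarrow> real" where
  "tri_area A B C = \<bar>cross (vsub B A) (vsub C A)\<bar> / 2"

end

theory Submission
  imports Defs
begin

text \<open>
  By Joachimsthal's integral, along a 3-periodic orbit the quantity
  \<open>J = N(P\<^sub>i) \<bullet> (P\<^sub>j - P\<^sub>i) / \<bar>P\<^sub>j - P\<^sub>i\<bar>\<close>, with \<open>N\<close> the
  gradient normal of the ellipse, is the same for all three sides, and the reflection law turns
  this into \<open>cos \<theta>\<^sub>i = 2 J\<^sup>2 / \<bar>N(P\<^sub>i)\<bar>\<^sup>2 - 1\<close>.
  In the rational parameter \<open>t\<close> of the ellipse the three vertices are pairwise related by one
  symmetric biquadratic relation; by Vieta, the two neighbours of a vertex are the roots of a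
  quadratic whose coefficients are polynomials in its parameter. Eliminating them shows that
  \<open>K = J\<^sup>2\<close> is a root of a quadratic depending only on \<open>a, b\<close>, and that
  \<open>\<Sum> 1 / \<bar>N(P\<^sub>i)\<bar>\<^sup>2\<close> is a function of \<open>K\<close> alone. Hence
  \<open>\<Sum> cos \<theta>\<^sub>i = K (a\<^sup>2 + b\<^sup>2)\<close> is constant. For every triangle
  \<open>\<Sum> cos \<theta>\<^sub>i = 1 + r/R\<close>, the angles of the excentral triangle satisfy
  \<open>\<bar>\<Prod> cos \<theta>'\<^sub>i\<bar> = r/(4R)\<close>, and the area ratio is \<open>2R/r\<close>;
  so the other two quantities are constant as well.
\<close>

section \<open>Vectors and angles\<close>

lemma vsub_pair [simp]: "vsub (x, y) (x', y') = (x - x', y - y')"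
  by (simp add: vsub_def)

lemma vscale_pair [simp]: "vscale c (x, y) = (c * x, c * y)"
  by (simp add: vscale_def)

lemma dot_pair [simp]: "dot (x, y) (x', y') = x * x' + y * y'"
  by (simp add: dot_def)

lemma cross_pair [simp]: "cross (x, y) (x', y') = x * y' - y * x'"
  by (simp add: cross_def)

lemma dot_vscale [simp]: "dot (vscale c u) v = c * dot u v" "dot u (vscale c v) = c * dot u v"
  by (simp_all add: dot_def vscale_def algebra_simps)

lemma cross_vscale [simp]: "cross (vscale c u) v = c * cross u v" "cross u (vscale c v) = c * cross u v"
  by (simp_all add: cross_def vscale_def algebra_simps)

lemma dot_self_nonneg: "dot u u \<ge> 0"
  by (simp add: dot_def)

lemma vlen_squared: "(vlen u)^2 = dot u u"
  by (simp add: vlen_def dot_self_nonneg)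

lemma vlen_vsub_commute: "vlen (vsub P Q) = vlen (vsub Q P)"
  by (simp add: vlen_def dot_def vsub_def algebra_simps)

lemma dot_vsub_self_commute: "dot (vsub P Q) (vsub P Q) = dot (vsub Q P) (vsub Q P)"
  by (simp add: dot_def vsub_def algebra_simps)

lemma vlen_vsub_pos:
  assumes "P \<noteq> Q"
  shows "vlen (vsub P Q) > 0"
proof -
  have "dot (vsub P Q) (vsub P Q) \<noteq> 0"
    using assms by (auto simp: dot_def vsub_def prod_eq_iff)
  then show ?thesis
    using dot_self_nonneg[of "vsub P Q"] by (simp add: vlen_def)
qed

lemma dot_squared_le: "(dot u v)^2 \<le> dot u u * dot v v"
proof -
  have "dot u u * dot v v - (dot u v)^2 = (cross u v)^2"
    unfolding dot_def cross_def by algebra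
  then show ?thesis
    by (metis diff_ge_0_iff_ge zero_le_power2)
qed

lemma abs_dot_le: "\<bar>dot u v\<bar> \<le> vlen u * vlen v"
  using real_sqrt_le_mono[OF dot_squared_le[of u v]]
  by (simp add: vlen_def real_sqrt_mult)

lemma cos_interior_angle:
  "cos (interior_angle A B C) =
     dot (vsub B A) (vsub C A) / (vlen (vsub B A) * vlen (vsub C A))"
proof -
  define L where "L = vlen (vsub B A) * vlen (vsub C A)"
  have le: "\<bar>dot (vsub B A) (vsub C A)\<bar> \<le> L"
    unfolding L_def by (rule abs_dot_le)
  have "\<bar>dot (vsub B A) (vsub C A) / L\<bar> \<le> 1"
  proof (cases "L = 0")
    case False
    with le have "L > 0" by linarith
    with le show ?thesis by (simp add: abs_divide)
  qed simp
  then show ?thesis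
    unfolding interior_angle_def L_def by (simp add: cos_arccos_abs)
qed

lemma cos_interior_angle_squared:
  "(cos (interior_angle A B C))^2 =
     (dot (vsub B A) (vsub C A))^2 / (dot (vsub B A) (vsub B A) * dot (vsub C A) (vsub C A))"
  unfolding cos_interior_angle by (simp add: power_divide power_mult_distrib vlen_squared)

lemma dot_unit_dir_self:
  assumes "P \<noteq> Q"
  shows "dot (unit_dir P Q) (unit_dir P Q) = 1"
proof -
  have "vlen (vsub Q P) > 0"
    using assms by (intro vlen_vsub_pos) simp
  then show ?thesis
    unfolding unit_dir_def dot_vscale using vlen_squared[of "vsub Q P", symmetric]
    by (simp add: power2_eq_square)
qed

lemma dot_unit_dirs: "dot (unit_dir P Q) (unit_dir P R) = cos (interior_angle P Q R)"
  unfolding unit_dir_def dot_vscale cos_interior_angle by simp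

lemma cross_unit_dirs:
  "cross (unit_dir P Q) (unit_dir P R) = cross (vsub Q P) (vsub R P) / (vlen (vsub Q P) * vlen (vsub R P))"
  unfolding unit_dir_def cross_vscale by simp

lemma lines_meet_unique:
  assumes "on_line B d X" "on_line C e X" "on_line B d Y" "on_line C e Y" "cross d e \<noteq> 0"
  shows "X = Y"
proof -
  have "cross (vsub X Y) d = 0" "cross (vsub X Y) e = 0"
    using assms(1-4) unfolding on_line_def cross_def vsub_def by (simp_all add: algebra_simps)
  then have "(fst X - fst Y) * cross d e = 0" "(snd X - snd Y) * cross d e = 0"
    unfolding cross_def vsub_def by (simp_all, algebra+)
  with assms(5) show ?thesis
    by (simp add: prod_eq_iff)
qed

section \<open>Triangles and their excentral triangles\<close>

text \<open>Twice \<open>s - a\<close> for the semiperimeter \<open>s\<close>; a constant of its own, so that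
  field simplification treats it as an atom.\<close>
definition side_excess :: "real \<Rightarrow> real \<Rightarrow> real \<Rightarrow> real" where
  "side_excess a b c = b + c - a"

definition r_over_R :: "real \<Rightarrow> real \<Rightarrow> real \<Rightarrow> real" where
  "r_over_R a b c = side_excess a b c * side_excess b c a * side_excess c a b / (2 * a * b * c)"

lemma sum_cosines_r_over_R:
  fixes a b c :: real
  assumes "a \<noteq> 0" "b \<noteq> 0" "c \<noteq> 0"
  shows "(b^2 + c^2 - a^2) / (2 * b * c) + (c^2 + a^2 - b^2) / (2 * c * a)
     + (a^2 + b^2 - c^2) / (2 * a * b) = 1 + r_over_R a b c"
  unfolding r_over_R_def side_excess_def using assms
  by (simp add: field_simps) (simp add: algebra_simps power2_eq_square power3_eq_cube)

lemma pos_of_prod_pos_sums_pos: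
  fixes p q r :: real
  assumes "p * q * r > 0" "p + q > 0" "q + r > 0" "r + p > 0"
  shows "p > 0" "q > 0" "r > 0"
proof -
  have first_pos: "u > 0" if "u * v * w > 0" "u + v > 0" "w + u > 0" for u v w :: real
  proof (rule ccontr)
    assume "\<not> u > 0"
    moreover from this that(2,3) have "v > 0" "w > 0" by linarith+
    ultimately have "u * v * w \<le> 0"
      by (simp add: mult_nonpos_nonneg)
    with that(1) show False by simp
  qed
  show "p > 0"
    using assms(1,2,4) by (rule first_pos)
  show "q > 0"
    using assms by (intro first_pos[of q r p]) (simp_all add: ac_simps)
  show "r > 0"
    using assms by (intro first_pos[of r p q]) (simp_all add: ac_simps)
qed

locale triangle =
  fixes x1 y1 x2 y2 x3 y3 :: real
  assumes nondeg: "nondegenerate (x1, y1) (x2, y2) (x3, y3)"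
begin

abbreviation "l1 \<equiv> vlen (vsub (x3, y3) (x2, y2))"
abbreviation "l2 \<equiv> vlen (vsub (x1, y1) (x3, y3))"
abbreviation "l3 \<equiv> vlen (vsub (x2, y2) (x1, y1))"
abbreviation "D1 \<equiv> side_excess l1 l2 l3"
abbreviation "D2 \<equiv> side_excess l2 l3 l1"
abbreviation "D3 \<equiv> side_excess l3 l1 l2"
abbreviation "area2 \<equiv> (x2 - x1) * (y3 - y1) - (y2 - y1) * (x3 - x1)"
abbreviation "J1 \<equiv> excenter (x1, y1) (x2, y2) (x3, y3)"
abbreviation "J2 \<equiv> excenter (x2, y2) (x3, y3) (x1, y1)"
abbreviation "J3 \<equiv> excenter (x3, y3) (x1, y1) (x2, y2)"

lemma area2_nonzero: "area2 \<noteq> 0"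
  using nondeg by (simp add: nondegenerate_def)

text \<open>Facts proved at the first vertex transfer to the others by interpreting the rotated
  triangle, whose \<open>l\<^sub>i\<close>, \<open>D\<^sub>i\<close>, \<open>J\<^sub>i\<close> are syntactically those of this one,
  permuted.\<close>
lemma rotate: "triangle x2 y2 x3 y3 x1 y1"
  using area2_nonzero by unfold_locales (simp add: nondegenerate_def algebra_simps)

lemma l1_pos: "l1 > 0"
  using area2_nonzero by (intro vlen_vsub_pos) auto

lemma sides_pos: "l1 > 0" "l2 > 0" "l3 > 0"
proof -
  interpret r2: triangle x2 y2 x3 y3 x1 y1 by (rule rotate)
  interpret r3: triangle x3 y3 x1 y1 x2 y2 by (rule r2.rotate)
  show "l1 > 0" "l2 > 0" "l3 > 0" by (fact l1_pos r2.l1_pos r3.l1_pos)+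
qed

lemma sides_squared:
  "l1^2 = (x3 - x2)^2 + (y3 - y2)^2"
  "l2^2 = (x1 - x3)^2 + (y1 - y3)^2"
  "l3^2 = (x2 - x1)^2 + (y2 - y1)^2"
  using vlen_squared[of "vsub (x3, y3) (x2, y2)"] vlen_squared[of "vsub (x1, y1) (x3, y3)"]
    vlen_squared[of "vsub (x2, y2) (x1, y1)"]
  by (simp_all add: power2_eq_square)

lemma heron: "(l1 + l2 + l3) * (D1 * D2 * D3) = 4 * area2^2"
  unfolding side_excess_def using sides_squared by algebra

lemma side_excess_pos: "D1 > 0" "D2 > 0" "D3 > 0"
proof -
  have "(l1 + l2 + l3) * (D1 * D2 * D3) > 0"
    unfolding heron using area2_nonzero by simp
  moreover have "l1 + l2 + l3 > 0"
    using sides_pos by linarith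
  ultimately have "D1 * D2 * D3 > 0"
    by (rule zero_less_mult_pos)
  then show "D1 > 0" "D2 > 0" "D3 > 0"
    by (rule pos_of_prod_pos_sums_pos; use sides_pos in \<open>simp add: side_excess_def\<close>)+
qed

lemmas lengths_pos = sides_pos side_excess_pos

lemma r_over_R_pos: "r_over_R l1 l2 l3 > 0"
  unfolding r_over_R_def using side_excess_pos sides_pos by simp

lemma cos_angle_P1: "cos (interior_angle (x1, y1) (x2, y2) (x3, y3)) = (l2^2 + l3^2 - l1^2) / (2 * l2 * l3)"
proof -
  have dot: "dot (vsub (x2, y2) (x1, y1)) (vsub (x3, y3) (x1, y1)) = (l2^2 + l3^2 - l1^2) / 2"
    using sides_squared by (simp add: power2_eq_square algebra_simps)
  have "vlen (vsub (x3, y3) (x1, y1)) = l2"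
    by (rule vlen_vsub_commute)
  then show ?thesis
    unfolding cos_interior_angle dot by (simp add: ac_simps)
qed

lemma sum_cos_interior_angles:
  "cos (interior_angle (x1, y1) (x2, y2) (x3, y3)) + cos (interior_angle (x2, y2) (x3, y3) (x1, y1))
     + cos (interior_angle (x3, y3) (x1, y1) (x2, y2)) = 1 + r_over_R l1 l2 l3"
proof -
  interpret r2: triangle x2 y2 x3 y3 x1 y1 by (rule rotate)
  interpret r3: triangle x3 y3 x1 y1 x2 y2 by (rule r2.rotate)
  show ?thesis
    unfolding cos_angle_P1 r2.cos_angle_P1 r3.cos_angle_P1
    using sides_pos by (intro sum_cosines_r_over_R) auto
qed

lemma excenter_P1: "J1 = ((l2 * x2 + l3 * x3 - l1 * x1) / D1, (l2 * y2 + l3 * y3 - l1 * y1) / D1)"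
  (is "_ = ?E")
proof -
  have l1': "vlen (vsub (x2, y2) (x3, y3)) = l1" and l3': "vlen (vsub (x1, y1) (x2, y2)) = l3"
    by (rule vlen_vsub_commute)+
  have dir2: "ext_bisector_dir (x2, y2) (x3, y3) (x1, y1) =
      ((x3 - x2) / l1 - (x1 - x2) / l3, (y3 - y2) / l1 - (y1 - y2) / l3)"
    unfolding ext_bisector_dir_def unit_dir_def l3' by simp
  have dir3: "ext_bisector_dir (x3, y3) (x1, y1) (x2, y2) =
      ((x1 - x3) / l2 - (x2 - x3) / l1, (y1 - y3) / l2 - (y2 - y3) / l1)"
    unfolding ext_bisector_dir_def unit_dir_def l1' by simp
  have on2: "on_line (x2, y2) (ext_bisector_dir (x2, y2) (x3, y3) (x1, y1)) ?E"
    unfolding on_line_def dir2 using lengths_pos by (simp add: field_simps side_excess_def)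
  have on3: "on_line (x3, y3) (ext_bisector_dir (x3, y3) (x1, y1) (x2, y2)) ?E"
    unfolding on_line_def dir3 using lengths_pos by (simp add: field_simps side_excess_def)
  have "cross (ext_bisector_dir (x2, y2) (x3, y3) (x1, y1)) (ext_bisector_dir (x3, y3) (x1, y1) (x2, y2))
      = area2 * D1 / (l1 * l2 * l3)"
    unfolding dir2 dir3 using lengths_pos by (simp add: field_simps side_excess_def)
  then have "cross (ext_bisector_dir (x2, y2) (x3, y3) (x1, y1)) (ext_bisector_dir (x3, y3) (x1, y1) (x2, y2)) \<noteq> 0"
    using lengths_pos area2_nonzero by simp
  with on2 on3 show ?thesis
    unfolding excenter_def by (blast intro: the_equality lines_meet_unique)
qed

lemma excentral_vectors_J1:
  "dot (vsub J2 J1) (vsub J2 J1) = 4 * l1 * l2 * l3^2 / (D1 * D2)"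
  "dot (vsub J2 J1) (vsub J3 J1) = 2 * l1 * l2 * l3 / D1"
  "cross (vsub J2 J1) (vsub J3 J1) = 4 * l1 * l2 * l3 * area2 / (D1 * D2 * D3)"
proof -
  interpret r2: triangle x2 y2 x3 y3 x1 y1 by (rule rotate)
  interpret r3: triangle x3 y3 x1 y1 x2 y2 by (rule r2.rotate)
  define W2 where "W2 = (l3 * (x3 - x2) - l1 * (x1 - x2), l3 * (y3 - y2) - l1 * (y1 - y2))"
  define W3 where "W3 = (l1 * (x1 - x3) - l2 * (x2 - x3), l1 * (y1 - y3) - l2 * (y2 - y3))"
  have side3: "vsub J2 J1 = vscale (2 * l3 / (D1 * D2)) W3"
    unfolding excenter_P1 r2.excenter_P1 W3_def using lengths_pos by (simp add: field_simps side_excess_def)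
  have side2: "vsub J3 J1 = vscale (- 2 * l2 / (D3 * D1)) W2"
    unfolding excenter_P1 r3.excenter_P1 W2_def using lengths_pos by (simp add: field_simps side_excess_def) algebra
  have "dot W3 W3 = l1 * l2 * D1 * D2"
    unfolding W3_def side_excess_def using sides_squared by simp algebra
  then show "dot (vsub J2 J1) (vsub J2 J1) = 4 * l1 * l2 * l3^2 / (D1 * D2)"
    unfolding side3 using lengths_pos by (simp add: field_simps power2_eq_square)
  have dot32: "dot W3 W2 = - l1 * (D1 * D2 * D3) / 2"
    unfolding W2_def W3_def side_excess_def using sides_squared by simp algebra
  show "dot (vsub J2 J1) (vsub J3 J1) = 2 * l1 * l2 * l3 / D1"
    unfolding side2 side3 dot_vscale dot32 using lengths_pos by (simp add: field_simps)
  have cross32: "cross W3 W2 = - l1 * D1 * area2"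
    unfolding W2_def W3_def side_excess_def by simp algebra
  show "cross (vsub J2 J1) (vsub J3 J1) = 4 * l1 * l2 * l3 * area2 / (D1 * D2 * D3)"
    unfolding side2 side3 cross_vscale cross32 using lengths_pos by (simp add: field_simps)
qed

lemma excentral_cos_sq_J1: "(cos (interior_angle J1 J2 J3))^2 = D2 * D3 / (4 * l2 * l3)"
proof -
  interpret r2: triangle x2 y2 x3 y3 x1 y1 by (rule rotate)
  interpret r3: triangle x3 y3 x1 y1 x2 y2 by (rule r2.rotate)
  have side13: "dot (vsub J3 J1) (vsub J3 J1) = 4 * l3 * l1 * l2^2 / (D3 * D1)"
    using r3.excentral_vectors_J1(1) by (simp only: dot_vsub_self_commute)
  show ?thesis
    unfolding cos_interior_angle_squared excentral_vectors_J1 side13 using lengths_pos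
    by (simp add: field_simps power2_eq_square)
qed

lemma excentral_cos_product:
  "\<bar>cos (interior_angle J1 J2 J3) * cos (interior_angle J2 J3 J1) * cos (interior_angle J3 J1 J2)\<bar>
     = r_over_R l1 l2 l3 / 4"
proof -
  interpret r2: triangle x2 y2 x3 y3 x1 y1 by (rule rotate)
  interpret r3: triangle x3 y3 x1 y1 x2 y2 by (rule r2.rotate)
  have sq: "\<bar>cos (interior_angle J1 J2 J3) * cos (interior_angle J2 J3 J1) * cos (interior_angle J3 J1 J2)\<bar>^2
      = (r_over_R l1 l2 l3 / 4)^2"
    unfolding power2_abs power_mult_distrib excentral_cos_sq_J1 r2.excentral_cos_sq_J1
      r3.excentral_cos_sq_J1 r_over_R_def using lengths_pos by (simp add: field_simps power2_eq_square)
  then show ?thesis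
    using power2_eq_imp_eq[OF sq abs_ge_zero] r_over_R_pos by simp
qed

lemma excentral_area_ratio:
  "tri_area J1 J2 J3 / tri_area (x1, y1) (x2, y2) (x3, y3) = 2 / r_over_R l1 l2 l3"
proof -
  define A where "A = area2"
  have "A \<noteq> 0"
    unfolding A_def by (rule area2_nonzero)
  moreover have "tri_area J1 J2 J3 = \<bar>4 * l1 * l2 * l3 * A / (D1 * D2 * D3)\<bar> / 2"
    unfolding tri_area_def excentral_vectors_J1 A_def ..
  moreover have "tri_area (x1, y1) (x2, y2) (x3, y3) = \<bar>A\<bar> / 2"
    unfolding tri_area_def A_def by simp
  ultimately show ?thesis
    unfolding r_over_R_def using lengths_pos by (simp add: abs_mult field_simps)
qed

end

section \<open>The reflection law at a vertex\<close>

text \<open>Joachimsthal's form: its ratio to \<open>\<bar>Q - P\<bar>\<close> is the integral of the billiard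
  (cf. \<open>dot_ellipse_normal\<close>).\<close>
definition joachimsthal :: "real \<Rightarrow> real \<Rightarrow> pt \<Rightarrow> pt \<Rightarrow> real" where
  "joachimsthal a b P Q = fst P * fst Q / a^2 + snd P * snd Q / b^2 - 1"

lemma joachimsthal_commute: "joachimsthal a b P Q = joachimsthal a b Q P"
  by (simp add: joachimsthal_def mult.commute)

lemma dot_ellipse_normal:
  assumes "on_ellipse a b P"
  shows "dot (ellipse_normal a b P) (vsub Q P) = joachimsthal a b P Q"
  using assms unfolding on_ellipse_def ellipse_normal_def joachimsthal_def dot_def vsub_def
  by (simp add: algebra_simps power2_eq_square diff_divide_distrib)

lemma joachimsthal_neg:
  assumes "on_ellipse a b P" "on_ellipse a b Q" "P \<noteq> Q" "a \<noteq> 0" "b \<noteq> 0"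
  shows "joachimsthal a b P Q < 0"
proof -
  have "(fst P - fst Q)^2 / a^2 + (snd P - snd Q)^2 / b^2
      = ((fst P)^2 / a^2 + (snd P)^2 / b^2) + ((fst Q)^2 / a^2 + (snd Q)^2 / b^2)
        - 2 * (fst P * fst Q / a^2 + snd P * snd Q / b^2)"
    by (simp add: power2_diff diff_divide_distrib add_divide_distrib)
  then have "- 2 * joachimsthal a b P Q = (fst P - fst Q)^2 / a^2 + (snd P - snd Q)^2 / b^2"
    using assms(1,2) unfolding on_ellipse_def joachimsthal_def by simp
  moreover have "fst P \<noteq> fst Q \<or> snd P \<noteq> snd Q"
    using assms(3) by (auto simp: prod_eq_iff)
  then have "(fst P - fst Q)^2 / a^2 + (snd P - snd Q)^2 / b^2 > 0"
    using assms(4,5) by (auto intro: add_pos_nonneg add_nonneg_pos)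
  ultimately show ?thesis
    by simp
qed

abbreviation normal_sq :: "real \<Rightarrow> real \<Rightarrow> pt \<Rightarrow> real" where
  "normal_sq a b P \<equiv> dot (ellipse_normal a b P) (ellipse_normal a b P)"

lemma ellipse_normal_sq_pos:
  assumes "on_ellipse a b P"
  shows "normal_sq a b P > 0"
proof -
  have "ellipse_normal a b P \<noteq> (0, 0)"
  proof
    assume "ellipse_normal a b P = (0, 0)"
    then have "fst P * (fst P / a^2) + snd P * (snd P / b^2) = 0"
      by (auto simp: ellipse_normal_def)
    with assms show False
      by (simp add: on_ellipse_def power2_eq_square)
  qed
  then show ?thesis
    by (cases "ellipse_normal a b P") (auto simp: sum_squares_gt_zero_iff)
qed

lemma parallel_to_bisector:
  assumes u: "dot u u = 1" and v: "dot v v = 1" and "cross u v \<noteq> 0"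
    and par: "cross N (vadd u v) = 0"
  shows "dot N u = dot N v" and "2 * (dot N u)^2 = dot N N * (1 + dot u v)"
proof -
  have "dot (vadd u v) (vadd u v) \<noteq> 0"
  proof
    assume "dot (vadd u v) (vadd u v) = 0"
    then have "(fst u + fst v)^2 + (snd u + snd v)^2 = 0"
      by (simp add: dot_def vadd_def power2_eq_square)
    then have "fst u + fst v = 0 \<and> snd u + snd v = 0"
      by (simp only: sum_power2_eq_zero_iff)
    then have "cross u v = 0"
      by (auto simp: cross_def add_eq_0_iff)
    with \<open>cross u v \<noteq> 0\<close> show False ..
  qed
  moreover have "(dot N u - dot N v) * dot (vadd u v) (vadd u v) = 0"
    using u v par unfolding dot_def cross_def vadd_def by simp algebra
  ultimately show eq: "dot N u = dot N v"
    by simp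
  show "2 * (dot N u)^2 = dot N N * (1 + dot u v)"
    using u v par eq unfolding dot_def cross_def vadd_def by simp algebra
qed

lemma normal_bisects_joachimsthal:
  assumes ell: "on_ellipse a b P" and nd: "nondegenerate P Q R" and bis: "normal_bisects a b P Q R"
  shows "joachimsthal a b P Q / vlen (vsub Q P) = joachimsthal a b P R / vlen (vsub R P)"
    and "cos (interior_angle P Q R) = 2 * (joachimsthal a b P Q / vlen (vsub Q P))^2 / normal_sq a b P - 1"
proof -
  define N where "N = ellipse_normal a b P"
  have "P \<noteq> Q" "P \<noteq> R"
    using nd by (auto simp: nondegenerate_def cross_def vsub_def)
  have proj: "dot N (unit_dir P X) = joachimsthal a b P X / vlen (vsub X P)" for X
    unfolding N_def unit_dir_def dot_vscale dot_ellipse_normal[OF ell] by simp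
  have "cross (unit_dir P Q) (unit_dir P R) \<noteq> 0"
    unfolding cross_unit_dirs using nd \<open>P \<noteq> Q\<close> \<open>P \<noteq> R\<close> vlen_vsub_pos[of Q P] vlen_vsub_pos[of R P]
    by (simp add: nondegenerate_def)
  note bisector = parallel_to_bisector[OF dot_unit_dir_self[OF \<open>P \<noteq> Q\<close>] dot_unit_dir_self[OF \<open>P \<noteq> R\<close>]
      this bis[unfolded normal_bisects_def int_bisector_dir_def, folded N_def]]
  show "joachimsthal a b P Q / vlen (vsub Q P) = joachimsthal a b P R / vlen (vsub R P)"
    using bisector(1) unfolding proj .
  show "cos (interior_angle P Q R) = 2 * (joachimsthal a b P Q / vlen (vsub Q P))^2 / normal_sq a b P - 1"
    using bisector(2)[unfolded proj dot_unit_dirs, unfolded N_def] ellipse_normal_sq_pos[OF ell]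
    by (simp add: field_simps)
qed

lemma nondegenerate_rotate: "nondegenerate P Q R \<Longrightarrow> nondegenerate Q R P"
  unfolding nondegenerate_def cross_def vsub_def by (simp add: algebra_simps)

lemma nondegenerate_distinct: "nondegenerate P Q R \<Longrightarrow> P \<noteq> Q"
  unfolding nondegenerate_def cross_def vsub_def by auto

section \<open>Triangles with all sides tangent to a common caustic\<close>

text \<open>\<open>K\<close> is the square of Joachimsthal's integral, which is the same for all chords of a
  billiard trajectory.\<close>
definition caustic_chord :: "real \<Rightarrow> real \<Rightarrow> real \<Rightarrow> pt \<Rightarrow> pt \<Rightarrow> bool" where
  "caustic_chord a b K P Q \<longleftrightarrow> (joachimsthal a b P Q)^2 = K * dot (vsub Q P) (vsub Q P)"

lemma caustic_chord_commute: "caustic_chord a b K P Q \<longleftrightarrow> caustic_chord a b K Q P"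
  unfolding caustic_chord_def joachimsthal_commute[of a b P] dot_vsub_self_commute[of Q] ..

lemma caustic_chord_of_ratio:
  assumes "joachimsthal a b P Q / vlen (vsub Q P) = J" "P \<noteq> Q"
  shows "caustic_chord a b (J^2) P Q"
proof -
  have "vlen (vsub Q P) > 0"
    using assms(2) by (intro vlen_vsub_pos) simp
  then have "joachimsthal a b P Q = J * vlen (vsub Q P)"
    using assms(1) by (simp add: field_simps)
  then show ?thesis
    unfolding caustic_chord_def by (simp add: power_mult_distrib vlen_squared)
qed

text \<open>Rational parametrization by \<open>t = tan (\<phi>/2)\<close>, \<open>\<phi>\<close> the eccentric angle; it misses
  only the vertex \<open>(-a, 0)\<close>.\<close>
definition ellipse_point :: "real \<Rightarrow> real \<Rightarrow> real \<Rightarrow> pt" where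
  "ellipse_point a b t = (a * (1 - t^2) / (1 + t^2), 2 * b * t / (1 + t^2))"

lemma one_plus_square_pos: "1 + t^2 > (0::real)"
  by (simp add: add_pos_nonneg)

lemma ellipse_point_exists:
  assumes "a > 0" "b > 0" "on_ellipse a b P" "P \<noteq> (- a, 0)"
  shows "\<exists>t. P = ellipse_point a b t"
proof -
  obtain x y where P: "P = (x, y)" by fastforce
  have y2: "y^2 = b^2 * (a^2 - x^2) / a^2"
    using assms(1-3) unfolding P on_ellipse_def by (simp add: field_simps)
  have "a + x \<noteq> 0"
  proof
    assume "a + x = 0"
    then have "x = - a" by simp
    with y2 have "y = 0" by simp
    with \<open>x = - a\<close> assms(4) show False unfolding P by simp
  qed
  define t where "t = a * y / (b * (a + x))"
  have "t * (a + x) = a * y / b"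
    unfolding t_def using assms(2) \<open>a + x \<noteq> 0\<close> by simp
  then have "t^2 * (a + x)^2 = (a * y / b)^2"
    by (metis power_mult_distrib)
  also have "\<dots> = (a - x) * (a + x)"
    unfolding power_divide power_mult_distrib y2 using assms(1,2) by (simp add: field_simps power2_eq_square)
  finally have "t^2 * (a + x)^2 = (a - x) * (a + x)" .
  then have t2: "t^2 * (a + x) = a - x"
    using \<open>a + x \<noteq> 0\<close> by (simp add: power2_eq_square)
  have "x = a * (1 - t^2) / (1 + t^2)"
    using t2 one_plus_square_pos[of t] by (simp add: field_simps)
  moreover have "y = 2 * b * t / (1 + t^2)"
  proof -
    have "(1 + t^2) * (a + x) = 2 * a"
      using t2 by algebra
    moreover have "2 * b * t * (a + x) = 2 * a * y"
      unfolding t_def using assms(2) \<open>a + x \<noteq> 0\<close> by simp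
    ultimately have "(y * (1 + t^2) - 2 * b * t) * (a + x) = 0"
      by algebra
    then have "y * (1 + t^2) = 2 * b * t"
      using \<open>a + x \<noteq> 0\<close> by simp
    then show ?thesis
      using one_plus_square_pos[of t] by (simp add: field_simps)
  qed
  ultimately show ?thesis
    unfolding P ellipse_point_def by blast
qed

lemma ellipse_point_scaled:
  "ellipse_point a b t = (a * (1 - t^2) * (1 / (1 + t^2)), 2 * b * t * (1 / (1 + t^2)))"
  by (simp add: ellipse_point_def)

text \<open>For \<open>P = ellipse_point a b s\<close> and \<open>Q = ellipse_point a b t\<close>,
  \<open>\<bar>Q - P\<bar>\<^sup>2 = 4 (s - t)\<^sup>2 chord_form a\<^sup>2 b\<^sup>2 s t / ((1 + s\<^sup>2) (1 + t\<^sup>2))\<^sup>2\<close>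
  and \<open>joachimsthal a b P Q = -2 (s - t)\<^sup>2 / ((1 + s\<^sup>2) (1 + t\<^sup>2))\<close>.\<close>
definition chord_form :: "real \<Rightarrow> real \<Rightarrow> real \<Rightarrow> real \<Rightarrow> real" where
  "chord_form aa bb u v = aa * (u + v)^2 + bb * (1 - u * v)^2"

lemma chord_form_diag_pos:
  assumes "aa > 0" "bb > 0"
  shows "chord_form aa bb t t > 0"
proof -
  have "aa * (t + t)^2 \<ge> 0" "bb * (1 - t * t)^2 \<ge> 0"
    using assms by simp_all
  moreover have "aa * (t + t)^2 > 0 \<or> bb * (1 - t * t)^2 > 0"
    using assms by (cases "t = 0") auto
  ultimately show ?thesis
    unfolding chord_form_def by linarith
qed

lemma caustic_chord_ellipse_point:
  assumes "a > 0" "b > 0" "s \<noteq> t"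
    and chord: "caustic_chord a b K (ellipse_point a b s) (ellipse_point a b t)"
  shows "(s - t)^2 = K * chord_form (a^2) (b^2) s t"
proof -
  define u v where "u = 1 / (1 + s^2)" and "v = 1 / (1 + t^2)"
  have hu: "u * (1 + s^2) = 1" and hv: "v * (1 + t^2) = 1"
    unfolding u_def v_def using one_plus_square_pos[of s] one_plus_square_pos[of t] by simp_all
  have "a * (1 - s^2) * u * (a * (1 - t^2) * v) / a^2 + 2 * b * s * u * (2 * b * t * v) / b^2
      = (1 - s^2) * (1 - t^2) * u * v + 4 * s * t * u * v"
    using assms(1,2) by (simp add: field_simps power2_eq_square)
  then have J: "joachimsthal a b (ellipse_point a b s) (ellipse_point a b t) = - 2 * (s - t)^2 * u * v"
    unfolding joachimsthal_def ellipse_point_scaled u_def[symmetric] v_def[symmetric] using hu hv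
    by simp algebra
  have L: "dot (vsub (ellipse_point a b t) (ellipse_point a b s)) (vsub (ellipse_point a b t) (ellipse_point a b s))
      = 4 * (s - t)^2 * chord_form (a^2) (b^2) s t * u^2 * v^2"
    unfolding ellipse_point_scaled u_def[symmetric] v_def[symmetric] chord_form_def using hu hv
    by simp algebra
  have "(4 * (s - t)^2 * u^2 * v^2) * (s - t)^2 = (4 * (s - t)^2 * u^2 * v^2) * (K * chord_form (a^2) (b^2) s t)"
    using chord unfolding caustic_chord_def J L by algebra
  moreover have "4 * (s - t)^2 * u^2 * v^2 \<noteq> 0"
    using \<open>s \<noteq> t\<close> hu hv by auto
  ultimately show ?thesis
    by simp
qed

lemma inverse_normal_sq_ellipse_point:
  assumes "a > 0" "b > 0"
  shows "1 / normal_sq a b (ellipse_point a b t)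
    = a^2 - 4 * a^2 * (a^2 - b^2) * (t^2 / chord_form (a^2) (b^2) t t)"
proof -
  define v where "v = 1 / (1 + t^2)"
  have hv: "v * (1 + t^2) = 1"
    unfolding v_def using one_plus_square_pos[of t] by simp
  have Q: "chord_form (a^2) (b^2) t t > 0"
    using assms by (intro chord_form_diag_pos) auto
  have "(a * (1 - t^2) * v / a^2)^2 + (2 * b * t * v / b^2)^2
      = chord_form (a^2) (b^2) t t * v^2 / (a^2 * b^2)"
    unfolding chord_form_def using assms by (simp add: field_simps power2_eq_square)
  then have nsq: "normal_sq a b (ellipse_point a b t) = chord_form (a^2) (b^2) t t * v^2 / (a^2 * b^2)"
    unfolding ellipse_normal_def ellipse_point_scaled v_def[symmetric] by (simp add: power2_eq_square)
  have "v \<noteq> 0"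
    using hv by auto
  then have "1 / normal_sq a b (ellipse_point a b t) = a^2 * (b^2 * (1 + t^2)^2) / chord_form (a^2) (b^2) t t"
    unfolding nsq using assms Q hv by (simp add: field_simps) algebra
  also have "b^2 * (1 + t^2)^2 = chord_form (a^2) (b^2) t t - 4 * (a^2 - b^2) * t^2"
    unfolding chord_form_def by algebra
  finally show ?thesis
    using Q by (simp add: field_simps)
qed

lemma chord_relation_vieta:
  fixes aa bb K x y z :: real
  assumes xy: "(x - y)^2 = K * chord_form aa bb x y"
    and xz: "(x - z)^2 = K * chord_form aa bb x z"
    and "y \<noteq> z"
  shows "(1 - K * (aa + bb * x^2)) * (y + z) = 2 * x * (1 + K * (aa - bb))"
    and "(1 - K * (aa + bb * x^2)) * (y * z) = x^2 * (1 - K * aa) - K * bb"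
proof -
  have "(y - z) * ((1 - K * (aa + bb * x^2)) * (y + z) - 2 * x * (1 + K * (aa - bb))) = 0"
    using xy xz unfolding chord_form_def by algebra
  then show sum: "(1 - K * (aa + bb * x^2)) * (y + z) = 2 * x * (1 + K * (aa - bb))"
    using \<open>y \<noteq> z\<close> by simp
  show "(1 - K * (aa + bb * x^2)) * (y * z) = x^2 * (1 - K * aa) - K * bb"
    using xy sum unfolding chord_form_def by algebra
qed

lemma chord_relation_leading_coeff_nonzero:
  fixes aa bb K x y z :: real
  assumes "aa > bb" "bb > 0" "K > 0"
    and sum: "(1 - K * (aa + bb * x^2)) * (y + z) = 2 * x * (1 + K * (aa - bb))"
    and prod: "(1 - K * (aa + bb * x^2)) * (y * z) = x^2 * (1 - K * aa) - K * bb"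
  shows "1 - K * (aa + bb * x^2) \<noteq> 0"
proof
  assume "1 - K * (aa + bb * x^2) = 0"
  moreover have "1 + K * (aa - bb) > 0"
    using assms(1-3) by (simp add: add_pos_pos)
  ultimately have "x = 0" "x^2 * (1 - K * aa) - K * bb = 0"
    using sum prod by simp_all
  with assms(2,3) show False
    by simp
qed

lemma poncelet_caustic_equation:
  fixes aa bb K x y z :: real
  assumes ab: "aa > bb" "bb > 0" and "K > 0"
    and xy: "(x - y)^2 = K * chord_form aa bb x y"
    and xz: "(x - z)^2 = K * chord_form aa bb x z"
    and yz: "(y - z)^2 = K * chord_form aa bb y z"
    and "y \<noteq> z"
  shows "K^2 * (aa - bb)^2 + 2 * K * (aa + bb) - 3 = 0"
proof -
  note vieta = chord_relation_vieta[OF xy xz \<open>y \<noteq> z\<close>]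
  have "(1 - K * (aa + bb * x^2))^2 * ((y - z)^2 - K * chord_form aa bb y z)
      = - K * (K^2 * (aa - bb)^2 + 2 * K * (aa + bb) - 3) * chord_form aa bb x x"
    using vieta unfolding chord_form_def by algebra
  then show ?thesis
    using yz \<open>K > 0\<close> chord_form_diag_pos[of aa bb x] ab
      chord_relation_leading_coeff_nonzero[OF ab \<open>K > 0\<close> vieta]
    by simp
qed

lemma poncelet_sum_chord_form:
  fixes aa bb K x y z :: real
  assumes ab: "aa > bb" "bb > 0" and "K > 0"
    and xy: "(x - y)^2 = K * chord_form aa bb x y"
    and xz: "(x - z)^2 = K * chord_form aa bb x z"
    and yz: "(y - z)^2 = K * chord_form aa bb y z"
    and "y \<noteq> z"
  shows "x^2 / chord_form aa bb x x + y^2 / chord_form aa bb y y + z^2 / chord_form aa bb z z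
           = (3 - K * (aa - bb)) / (8 * aa)"
proof -
  define A where "A = 1 - K * (aa + bb * x^2)"
  define B where "B = 2 * x * (1 + K * (aa - bb))"
  define C where "C = x^2 * (1 - K * aa) - K * bb"
  note vieta = chord_relation_vieta[OF xy xz \<open>y \<noteq> z\<close>]
  have s: "A * (y + z) = B" and p: "A * (y * z) = C"
    using vieta unfolding A_def B_def C_def by auto
  have "A \<noteq> 0"
    unfolding A_def using chord_relation_leading_coeff_nonzero[OF ab \<open>K > 0\<close> vieta] .
  have caustic: "K^2 * (aa - bb)^2 + 2 * K * (aa + bb) - 3 = 0"
    by (rule poncelet_caustic_equation[OF assms])
  have Q_pos: "chord_form aa bb t t > 0" for t
    using ab by (intro chord_form_diag_pos) auto
  txt \<open>Multiplied by \<open>A\<^sup>4\<close>, the symmetric functions of \<open>y, z\<close> become polynomials in \<open>x\<close>.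
    The cofactor \<open>D\<close> of the denominator comes from a computer algebra factorization;
    the numerator identity \<open>key\<close> holds modulo the caustic equation.\<close>
  define D where "D = (1 + 2 * K * (aa - bb) - K^2 * (aa - bb) * (3 * aa + bb))^2 * chord_form aa bb x x
     + 32 * K * aa * (aa - bb) * (K^2 * (aa - bb)^2 - 1) * (1 - K * (aa + bb)) * x^2"
  define M where "M = bb * (B^2 - 2 * A * C) * (A^2 + C^2) + 2 * (4 * aa - 2 * bb) * A^2 * C^2"
  have den: "A^4 * (chord_form aa bb y y * chord_form aa bb z z) = chord_form aa bb x x * D"
    using s p unfolding A_def B_def C_def D_def chord_form_def by algebra
  have num: "A^4 * (y^2 * chord_form aa bb z z + z^2 * chord_form aa bb y y) = M"
    using s p unfolding A_def B_def C_def M_def chord_form_def by algebra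
  have key: "8 * aa * M = ((3 - K * (aa - bb)) * chord_form aa bb x x - 8 * aa * x^2) * D"
    using caustic unfolding A_def B_def C_def D_def M_def chord_form_def by algebra
  have "chord_form aa bb x x * D > 0"
    unfolding den[symmetric] using \<open>A \<noteq> 0\<close> Q_pos by simp
  then have "D \<noteq> 0"
    by auto
  have "y^2 / chord_form aa bb y y + z^2 / chord_form aa bb z z
      = A^4 * (y^2 * chord_form aa bb z z + z^2 * chord_form aa bb y y)
        / (A^4 * (chord_form aa bb y y * chord_form aa bb z z))"
    using \<open>A \<noteq> 0\<close> Q_pos[of y] Q_pos[of z] by (simp add: field_simps)
  also have "\<dots> = M / (chord_form aa bb x x * D)"
    unfolding num den ..
  also have "\<dots> = (3 - K * (aa - bb)) / (8 * aa) - x^2 / chord_form aa bb x x"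
    using key \<open>D \<noteq> 0\<close> Q_pos[of x] ab by (simp add: field_simps)
  finally show ?thesis
    by simp
qed

lemma poncelet_triangle_normals_avoiding:
  fixes P1 P2 P3 :: pt
  assumes ab: "a > b" "b > 0" and "K > 0"
    and ell: "on_ellipse a b P1" "on_ellipse a b P2" "on_ellipse a b P3"
    and dist: "P1 \<noteq> P2" "P1 \<noteq> P3" "P2 \<noteq> P3"
    and chords: "caustic_chord a b K P1 P2" "caustic_chord a b K P1 P3" "caustic_chord a b K P2 P3"
    and avoid: "(- a, 0) \<notin> {P1, P2, P3}"
  shows "K^2 * (a^2 - b^2)^2 + 2 * K * (a^2 + b^2) - 3 = 0"
    and "2 * K * (1 / normal_sq a b P1 + 1 / normal_sq a b P2 + 1 / normal_sq a b P3) = K * (a^2 + b^2) + 3"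
proof -
  have "a > 0" using ab by simp
  obtain t1 t2 t3 where P: "P1 = ellipse_point a b t1" "P2 = ellipse_point a b t2" "P3 = ellipse_point a b t3"
    using ellipse_point_exists[OF \<open>a > 0\<close> \<open>b > 0\<close>] ell avoid by (metis insertCI)
  have "t1 \<noteq> t2" "t1 \<noteq> t3" "t2 \<noteq> t3"
    using dist unfolding P by auto
  have "a^2 > b^2" "b^2 > 0"
    using ab by (simp_all add: power_strict_mono)
  note relations = \<open>a^2 > b^2\<close> \<open>b^2 > 0\<close> \<open>K > 0\<close>
    caustic_chord_ellipse_point[OF \<open>a > 0\<close> \<open>b > 0\<close> \<open>t1 \<noteq> t2\<close> chords(1)[unfolded P]]
    caustic_chord_ellipse_point[OF \<open>a > 0\<close> \<open>b > 0\<close> \<open>t1 \<noteq> t3\<close> chords(2)[unfolded P]]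
    caustic_chord_ellipse_point[OF \<open>a > 0\<close> \<open>b > 0\<close> \<open>t2 \<noteq> t3\<close> chords(3)[unfolded P]] \<open>t2 \<noteq> t3\<close>
  show caustic: "K^2 * (a^2 - b^2)^2 + 2 * K * (a^2 + b^2) - 3 = 0"
    by (rule poncelet_caustic_equation[OF relations])
  have "2 * K * (1 / normal_sq a b P1 + 1 / normal_sq a b P2 + 1 / normal_sq a b P3)
      = 6 * K * a^2 - 8 * K * a^2 * (a^2 - b^2) * (t1^2 / chord_form (a^2) (b^2) t1 t1
          + t2^2 / chord_form (a^2) (b^2) t2 t2 + t3^2 / chord_form (a^2) (b^2) t3 t3)"
    unfolding P inverse_normal_sq_ellipse_point[OF \<open>a > 0\<close> \<open>b > 0\<close>] by (simp add: algebra_simps)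
  also have "\<dots> = 6 * K * a^2 - K * (a^2 - b^2) * (3 - K * (a^2 - b^2))"
    unfolding poncelet_sum_chord_form[OF relations] using \<open>a > 0\<close> by simp
  also have "\<dots> = K * (a^2 + b^2) + 3"
    using caustic by algebra
  finally show "2 * K * (1 / normal_sq a b P1 + 1 / normal_sq a b P2 + 1 / normal_sq a b P3) = K * (a^2 + b^2) + 3" .
qed

definition reflect_minor_axis :: "pt \<Rightarrow> pt" where
  "reflect_minor_axis P = (- fst P, snd P)"

lemma reflect_minor_axis_invariants:
  "on_ellipse a b (reflect_minor_axis P) \<longleftrightarrow> on_ellipse a b P"
  "caustic_chord a b K (reflect_minor_axis P) (reflect_minor_axis Q) \<longleftrightarrow> caustic_chord a b K P Q"
  "normal_sq a b (reflect_minor_axis P) = normal_sq a b P"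
  "reflect_minor_axis P = reflect_minor_axis Q \<longleftrightarrow> P = Q"
  "(- a, 0) = reflect_minor_axis P \<longleftrightarrow> (a, 0) = P"
  unfolding reflect_minor_axis_def on_ellipse_def caustic_chord_def joachimsthal_def ellipse_normal_def
    dot_def vsub_def
  by (auto simp: prod_eq_iff algebra_simps)

lemma caustic_chord_major_vertices:
  assumes "a \<noteq> 0" "on_ellipse a b P"
    and "caustic_chord a b K (a, 0) (- a, 0)" "caustic_chord a b K (a, 0) P"
  shows "P = (a, 0) \<or> P = (- a, 0)"
proof -
  obtain x y where P: "P = (x, y)" by fastforce
  have "K * a^2 = 1"
    using assms(1,3) by (simp add: caustic_chord_def joachimsthal_def power2_eq_square)
  moreover have "(x / a - 1)^2 = K * ((x - a)^2 + y^2)"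
    using assms(1,4) unfolding P caustic_chord_def joachimsthal_def
    by (simp add: power2_eq_square power2_commute[of x a])
  then have "a^2 * (x / a - 1)^2 = (K * a^2) * ((x - a)^2 + y^2)"
    by simp
  moreover have "a^2 * (x / a - 1)^2 = (x - a)^2"
    using assms(1) by (simp add: power2_eq_square field_simps)
  ultimately have "y = 0" by simp
  with assms(1,2) have "x^2 = a^2"
    unfolding P on_ellipse_def by (simp add: field_simps)
  with \<open>y = 0\<close> show ?thesis
    unfolding P by (auto simp: power2_eq_iff)
qed

lemma caustic_triangle_misses_major_vertex:
  fixes P1 P2 P3 :: pt
  assumes "a > 0"
    and ell: "on_ellipse a b P1" "on_ellipse a b P2" "on_ellipse a b P3"
    and dist: "P1 \<noteq> P2" "P1 \<noteq> P3" "P2 \<noteq> P3"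
    and chords: "caustic_chord a b K P1 P2" "caustic_chord a b K P1 P3" "caustic_chord a b K P2 P3"
  shows "(- a, 0) \<notin> {P1, P2, P3} \<or> (a, 0) \<notin> {P1, P2, P3}"
proof (rule ccontr)
  assume "\<not> ?thesis"
  then have vertices: "(a, 0) \<in> {P1, P2, P3}" "(- a, 0) \<in> {P1, P2, P3}" by auto
  have "card {P1, P2, P3} = 3"
    using dist by simp
  moreover have "card {(a, 0), (- a, 0) :: pt} \<le> 2"
    by (simp add: card_insert_if)
  ultimately have "\<not> {P1, P2, P3} \<subseteq> {(a, 0), (- a, 0)}"
    using card_mono[of "{(a, 0), (- a, 0) :: pt}" "{P1, P2, P3}"] by fastforce
  then obtain R where R: "R \<in> {P1, P2, P3}" "R \<noteq> (a, 0)" "R \<noteq> (- a, 0)" by blast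
  have chord: "caustic_chord a b K P Q" if "P \<in> {P1, P2, P3}" "Q \<in> {P1, P2, P3}" "P \<noteq> Q" for P Q
    using that chords by (blast intro: caustic_chord_commute[THEN iffD1])
  have "(a, 0) \<noteq> (- a, 0)"
    using \<open>a > 0\<close> by simp
  then have "caustic_chord a b K (a, 0) (- a, 0)" "caustic_chord a b K (a, 0) R"
    using chord vertices R by simp_all
  moreover have "on_ellipse a b R"
    using R(1) ell by blast
  ultimately have "R = (a, 0) \<or> R = (- a, 0)"
    using \<open>a > 0\<close> caustic_chord_major_vertices by simp
  with R show False by simp
qed

lemma poncelet_triangle_normals:
  fixes P1 P2 P3 :: pt
  assumes ab: "a > b" "b > 0" and "K > 0"
    and ell: "on_ellipse a b P1" "on_ellipse a b P2" "on_ellipse a b P3"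
    and dist: "P1 \<noteq> P2" "P1 \<noteq> P3" "P2 \<noteq> P3"
    and chords: "caustic_chord a b K P1 P2" "caustic_chord a b K P1 P3" "caustic_chord a b K P2 P3"
  shows "K^2 * (a^2 - b^2)^2 + 2 * K * (a^2 + b^2) - 3 = 0 \<and>
    2 * K * (1 / normal_sq a b P1 + 1 / normal_sq a b P2 + 1 / normal_sq a b P3) = K * (a^2 + b^2) + 3"
proof -
  have "a > 0" using ab by simp
  from caustic_triangle_misses_major_vertex[OF this ell dist chords] show ?thesis
  proof
    assume "(- a, 0) \<notin> {P1, P2, P3}"
    then show ?thesis
      using poncelet_triangle_normals_avoiding[OF ab \<open>K > 0\<close> ell dist chords] by blast
  next
    assume "(a, 0) \<notin> {P1, P2, P3}"
    then show ?thesis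
      using poncelet_triangle_normals_avoiding[OF ab \<open>K > 0\<close>, of "reflect_minor_axis P1"
          "reflect_minor_axis P2" "reflect_minor_axis P3"] ell dist chords
      by (simp add: reflect_minor_axis_invariants)
  qed
qed

section \<open>Three-periodic orbits\<close>

lemma caustic_equation_root:
  assumes "a > b" "b > 0" "K > 0" and eq: "K^2 * (a^2 - b^2)^2 + 2 * K * (a^2 + b^2) - 3 = 0"
  shows "K = (2 * sqrt (a^4 - a^2 * b^2 + b^4) - a^2 - b^2) / (a^2 - b^2)^2"
proof -
  have "(a^2 - b^2)^2 > 0"
    using assms(1,2) by (simp add: power_strict_mono)
  have "a^4 - a^2 * b^2 + b^4 = (a^2 - b^2)^2 + a^2 * b^2"
    by algebra
  also have "\<dots> \<ge> 0"
    by (intro add_nonneg_nonneg mult_nonneg_nonneg) simp_all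
  finally have radicand: "a^4 - a^2 * b^2 + b^4 \<ge> 0" .
  then have "(sqrt (a^4 - a^2 * b^2 + b^4))^2 = a^4 - a^2 * b^2 + b^4"
    by simp
  then have "((a^2 - b^2)^2 * K + a^2 + b^2)^2 = (2 * sqrt (a^4 - a^2 * b^2 + b^4))^2"
    using eq by algebra
  moreover have "(a^2 - b^2)^2 * K + a^2 + b^2 \<ge> 0"
    using assms by simp
  ultimately have "(a^2 - b^2)^2 * K + a^2 + b^2 = 2 * sqrt (a^4 - a^2 * b^2 + b^4)"
    by (rule power2_eq_imp_eq) (simp add: radicand)
  with \<open>(a^2 - b^2)^2 > 0\<close> show ?thesis
    by (simp add: field_simps)
qed

lemma billiard3_sum_cos:
  assumes ab: "a > b" "b > 0" and "billiard3 a b P1 P2 P3"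
  shows "cos (interior_angle P1 P2 P3) + cos (interior_angle P2 P3 P1) + cos (interior_angle P3 P1 P2)
    = (2 * sqrt (a^4 - a^2 * b^2 + b^4) - a^2 - b^2) / (a^2 - b^2)^2 * (a^2 + b^2)"
proof -
  have nd: "nondegenerate P1 P2 P3" "nondegenerate P2 P3 P1" "nondegenerate P3 P1 P2"
    and ell: "on_ellipse a b P1" "on_ellipse a b P2" "on_ellipse a b P3"
    and bis: "normal_bisects a b P1 P2 P3" "normal_bisects a b P2 P3 P1" "normal_bisects a b P3 P1 P2"
    using assms(3) nondegenerate_rotate unfolding billiard3_def by blast+
  have dist: "P1 \<noteq> P2" "P1 \<noteq> P3" "P2 \<noteq> P3"
    using nd nondegenerate_distinct by blast+
  note V1 = normal_bisects_joachimsthal[OF ell(1) nd(1) bis(1)]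
  note V2 = normal_bisects_joachimsthal[OF ell(2) nd(2) bis(2)]
  note V3 = normal_bisects_joachimsthal[OF ell(3) nd(3) bis(3)]
  define J where "J = joachimsthal a b P1 P2 / vlen (vsub P2 P1)"
  have J12: "joachimsthal a b P2 P1 / vlen (vsub P1 P2) = J"
    unfolding J_def joachimsthal_commute[of a b P2] vlen_vsub_commute[of P1] ..
  have J13: "joachimsthal a b P1 P3 / vlen (vsub P3 P1) = J"
    using V1(1) unfolding J_def ..
  have J23: "joachimsthal a b P2 P3 / vlen (vsub P3 P2) = J"
    using V2(1) J12 by simp
  have J31: "joachimsthal a b P3 P1 / vlen (vsub P1 P3) = J"
    unfolding joachimsthal_commute[of a b P3] vlen_vsub_commute[of P1] J13 ..
  have "joachimsthal a b P1 P2 < 0" "vlen (vsub P2 P1) > 0"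
    using joachimsthal_neg[OF ell(1,2) dist(1)] ab vlen_vsub_pos[of P2 P1] dist(1) by auto
  then have "J^2 > 0"
    unfolding J_def by simp
  note poncelet = poncelet_triangle_normals[OF ab this ell dist
      caustic_chord_of_ratio[OF J_def[symmetric] dist(1)] caustic_chord_of_ratio[OF J13 dist(2)]
      caustic_chord_of_ratio[OF J23 dist(3)]]
  have "cos (interior_angle P1 P2 P3) + cos (interior_angle P2 P3 P1) + cos (interior_angle P3 P1 P2)
      = 2 * J^2 * (1 / normal_sq a b P1 + 1 / normal_sq a b P2 + 1 / normal_sq a b P3) - 3"
    unfolding V1(2) V2(2) V3(2) J_def[symmetric] J23 J31 by (simp add: field_simps)
  also have "\<dots> = J^2 * (a^2 + b^2)"
    using poncelet by simp
  also have "J^2 = (2 * sqrt (a^4 - a^2 * b^2 + b^4) - a^2 - b^2) / (a^2 - b^2)^2"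
    using caustic_equation_root[OF ab \<open>J^2 > 0\<close> poncelet[THEN conjunct1]] .
  finally show ?thesis .
qed

theorem corollary1:
  fixes a b :: real
  assumes "a > b" and "b > 0"
  shows "\<exists>c1 c2 c3. \<forall>P1 P2 P3. billiard3 a b P1 P2 P3 \<longrightarrow>
     (let J1 = excenter P1 P2 P3; J2 = excenter P2 P3 P1; J3 = excenter P3 P1 P2 in
        cos (interior_angle P1 P2 P3) + cos (interior_angle P2 P3 P1)
          + cos (interior_angle P3 P1 P2) = c1 \<and>
        \<bar>cos (interior_angle J1 J2 J3) * cos (interior_angle J2 J3 J1)
          * cos (interior_angle J3 J1 J2)\<bar> = c2 \<and>
        tri_area J1 J2 J3 / tri_area P1 P2 P3 = c3)"
proof -
  define c where "c = (2 * sqrt (a^4 - a^2 * b^2 + b^4) - a^2 - b^2) / (a^2 - b^2)^2 * (a^2 + b^2)"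
  have "let J1 = excenter P1 P2 P3; J2 = excenter P2 P3 P1; J3 = excenter P3 P1 P2 in
        cos (interior_angle P1 P2 P3) + cos (interior_angle P2 P3 P1)
          + cos (interior_angle P3 P1 P2) = c \<and>
        \<bar>cos (interior_angle J1 J2 J3) * cos (interior_angle J2 J3 J1)
          * cos (interior_angle J3 J1 J2)\<bar> = (c - 1) / 4 \<and>
        tri_area J1 J2 J3 / tri_area P1 P2 P3 = 2 / (c - 1)"
    if billiard: "billiard3 a b P1 P2 P3" for P1 P2 P3
  proof -
    obtain x1 y1 x2 y2 x3 y3 where P: "P1 = (x1, y1)" "P2 = (x2, y2)" "P3 = (x3, y3)"
      by (metis prod.exhaust)
    interpret triangle x1 y1 x2 y2 x3 y3
      using billiard unfolding P billiard3_def by unfold_locales simp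
    have "1 + r_over_R l1 l2 l3 = c"
      using sum_cos_interior_angles billiard3_sum_cos[OF assms billiard] unfolding P c_def by simp
    then show ?thesis
      unfolding Let_def P using sum_cos_interior_angles excentral_cos_product excentral_area_ratio
      by auto
  qed
  then show ?thesis
    by blast
qed

end
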